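(* Let $m>l\ge1$ be integers and let $Q=(q_{ij})$ be an $m\times l$ real matrix such that for each $j=1,\dots,l$, $q_{jj}>\sum_{i\ne j,\,1\le i\le m}|q_{ij}|$. Let $\mathcal A$ be the set of all $l\times l$ submatrices of $Q$ (obtained by selecting $l$ of its $m$ rows), and let $S_1\in\mathcal A$ be the matrix formed by the first $l$ rows of $Q$. Then $\det S_1=\max_{S\in\mathcal A}|\det S|$. *)

theory Defs
  imports Main "Jordan_Normal_Form.Determinant" "Jordan_Normal_Form.DL_Submatrix"
begin

end

theory Submission
  imports Defs
begin

text \<open>Write \<open>q i j = Q $$ (i, j)\<close>. By column diagonal dominance the pivot \<open>q 0 0\<close> is positive and
exceeds the sum of the absolute values of the rest of its column. Clearing the pivot row by column
operations leaves a Schur complement that is again column diagonally dominant, and every \<open>l \<times> l\<close>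
row selection expands along its first column into minors of that complement. If the pivot row is
selected, only its term survives, giving \<open>q 0 0\<close> times a minor; otherwise the expansion is bounded
by \<open>D\<close> times the sum of \<open>\<bar>q k 0\<bar>\<close> over the selected rows \<open>k \<noteq> 0\<close>, hence by \<open>q 0 0 \<cdot> D\<close>, where
\<open>D > 0\<close> is the leading minor of the complement, which by induction bounds all its minors. The
leading minor of \<open>Q\<close> itself equals \<open>q 0 0 \<cdot> D\<close>.\<close>

definition rows_mat :: "nat \<Rightarrow> (nat \<Rightarrow> nat \<Rightarrow> 'a) \<Rightarrow> (nat \<Rightarrow> nat) \<Rightarrow> 'a mat" where
  "rows_mat n q g = mat n n (\<lambda>(i, j). q (g i) j)"

(* Row k after subtracting q 0 (Suc j) / q 0 0 times column 0 from each column Suc j and then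
   dropping column 0: rows 1.. form the Schur complement of the pivot, row 0 becomes zero. *)
definition col_elim :: "(nat \<Rightarrow> nat \<Rightarrow> 'a::field) \<Rightarrow> nat \<Rightarrow> nat \<Rightarrow> 'a" where
  "col_elim q k j = q k (Suc j) - q 0 (Suc j) / q 0 0 * q k 0"

definition col_diag_dominant :: "nat \<Rightarrow> nat \<Rightarrow> (nat \<Rightarrow> nat \<Rightarrow> real) \<Rightarrow> bool" where
  "col_diag_dominant m l q \<longleftrightarrow> (\<forall>j<l. q j j > (\<Sum>i\<in>{0..<m} - {j}. \<bar>q i j\<bar>))"

lemma rows_mat_carrier [simp]: "rows_mat n q g \<in> carrier_mat n n"
  by (simp add: rows_mat_def)

lemma det_subtract_first_column_multiples:
  fixes A :: "'a::comm_ring_1 mat"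
  assumes A: "A \<in> carrier_mat n n"
  shows "det (mat n n (\<lambda>(i, j). if j = 0 then A $$ (i, 0) else A $$ (i, j) - c j * A $$ (i, 0))) = det A"
proof -
  define C :: "'a mat" where "C = mat n n (\<lambda>(i, j). if i = j then 1 else if i = 0 then - c j else 0)"
  have C: "C \<in> carrier_mat n n" by (simp add: C_def)
  have "det C = 1"
  proof -
    have "upper_triangular C" by (auto simp: upper_triangular_def C_def)
    moreover have "diag_mat C = replicate n 1"
      by (simp add: diag_mat_def C_def list_eq_iff_nth_eq)
    ultimately show ?thesis using det_upper_triangular[OF _ C] by simp
  qed
  moreover have "A * C = mat n n (\<lambda>(i, j). if j = 0 then A $$ (i, 0) else A $$ (i, j) - c j * A $$ (i, 0))"
  proof (rule eq_matI)
    fix i j assume "i < dim_row (mat n n (\<lambda>(i, j). if j = 0 then A $$ (i, 0) else A $$ (i, j) - c j * A $$ (i, 0)))"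
      and "j < dim_col (mat n n (\<lambda>(i, j). if j = 0 then A $$ (i, 0) else A $$ (i, j) - c j * A $$ (i, 0)))"
    then have i: "i < n" and j: "j < n" by auto
    have "(A * C) $$ (i, j) = (\<Sum>k<n. A $$ (i, k) * C $$ (k, j))"
      using i j A C by (simp add: scalar_prod_def lessThan_atLeast0)
    also have "\<dots> = (\<Sum>k<n. (if k = j then A $$ (i, j) else 0) - (if k = 0 \<and> j \<noteq> 0 then c j * A $$ (i, 0) else 0))"
      by (rule sum.cong) (use j in \<open>auto simp: C_def\<close>)
    also have "\<dots> = (if j = 0 then A $$ (i, 0) else A $$ (i, j) - c j * A $$ (i, 0))"
      using j by (simp add: sum_subtractf)
    finally show "(A * C) $$ (i, j) = mat n n (\<lambda>(i, j). if j = 0 then A $$ (i, 0) else A $$ (i, j) - c j * A $$ (i, 0)) $$ (i, j)"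
      using i j by simp
  qed (use A C in auto)
  ultimately show ?thesis using det_mult[OF A C] by simp
qed

lemma det_rows_mat_Suc_col_elim:
  fixes q :: "nat \<Rightarrow> nat \<Rightarrow> 'a::field"
  shows "det (rows_mat (Suc n) q g) =
    (\<Sum>i<Suc n. (-1)^i * q (g i) 0 * det (rows_mat n (col_elim q) (g \<circ> insert_index i)))"
proof -
  define B where "B = mat (Suc n) (Suc n) (\<lambda>(i, j). if j = 0 then q (g i) 0 else q (g i) j - q 0 j / q 0 0 * q (g i) 0)"
  have B: "B \<in> carrier_mat (Suc n) (Suc n)" by (simp add: B_def)
  have "B = mat (Suc n) (Suc n) (\<lambda>(i, j). if j = 0 then rows_mat (Suc n) q g $$ (i, 0)
      else rows_mat (Suc n) q g $$ (i, j) - q 0 j / q 0 0 * rows_mat (Suc n) q g $$ (i, 0))"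
    unfolding B_def by (rule cong_mat) (auto simp: rows_mat_def)
  then have "det (rows_mat (Suc n) q g) = det B"
    by (simp add: det_subtract_first_column_multiples)
  also have "\<dots> = (\<Sum>i<Suc n. B $$ (i, 0) * cofactor B i 0)"
    by (rule laplace_expansion_column[OF B]) simp
  also have "\<dots> = (\<Sum>i<Suc n. (-1)^i * q (g i) 0 * det (rows_mat n (col_elim q) (g \<circ> insert_index i)))"
  proof (rule sum.cong)
    fix i assume "i \<in> {..<Suc n}"
    then have "mat_delete B i 0 = rows_mat n (col_elim q) (g \<circ> insert_index i)"
      by (intro eq_matI) (auto simp: mat_delete_def B_def rows_mat_def col_elim_def insert_index_def)
    then show "B $$ (i, 0) * cofactor B i 0 = (-1)^i * q (g i) 0 * det (rows_mat n (col_elim q) (g \<circ> insert_index i))"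
      using \<open>i \<in> {..<Suc n}\<close> by (simp add: cofactor_def B_def)
  qed simp
  finally show ?thesis .
qed

lemma det_rows_mat_zero_row:
  assumes "i < n" and "\<And>j. j < n \<Longrightarrow> q (g i) j = 0"
  shows "det (rows_mat n q g) = 0"
proof -
  have "det (rows_mat n q g) = (\<Sum>j<n. rows_mat n q g $$ (i, j) * cofactor (rows_mat n q g) i j)"
    by (rule laplace_expansion_row[OF rows_mat_carrier assms(1)])
  then show ?thesis using assms by (simp add: rows_mat_def)
qed

lemma col_elim_first_row:
  fixes q :: "nat \<Rightarrow> nat \<Rightarrow> 'a::field"
  assumes "q 0 0 \<noteq> 0"
  shows "col_elim q 0 j = 0"
  using assms by (simp add: col_elim_def)

lemma det_rows_mat_pivot_row:
  fixes q :: "nat \<Rightarrow> nat \<Rightarrow> 'a::field"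
  assumes "q 0 0 \<noteq> 0" and i0: "i0 < Suc n" "g i0 = 0"
  shows "det (rows_mat (Suc n) q g) = (-1)^i0 * q 0 0 * det (rows_mat n (col_elim q) (g \<circ> insert_index i0))"
proof -
  \<comment> \<open>for \<open>i \<noteq> i0\<close> the minor still contains the pivot row, which \<open>col_elim\<close> turns into zero\<close>
  have minor_zero: "det (rows_mat n (col_elim q) (g \<circ> insert_index i)) = 0" if "i < Suc n" "i \<noteq> i0" for i
  proof (rule det_rows_mat_zero_row)
    show "delete_index i i0 < n" using that i0 by (auto simp: delete_index_def)
    show "col_elim q ((g \<circ> insert_index i) (delete_index i i0)) j = 0" for j
      using that i0 assms(1) by (simp add: insert_delete_index col_elim_first_row)
  qed
  define t where "t i = (-1)^i * q (g i) 0 * det (rows_mat n (col_elim q) (g \<circ> insert_index i))" for i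
  have "det (rows_mat (Suc n) q g) = (\<Sum>i\<in>{..<Suc n}. t i)"
    unfolding t_def by (rule det_rows_mat_Suc_col_elim)
  also have "\<dots> = t i0 + (\<Sum>i\<in>{..<Suc n} - {i0}. t i)"
    by (rule sum.remove) (use i0 in auto)
  also have "(\<Sum>i\<in>{..<Suc n} - {i0}. t i) = 0"
    by (intro sum.neutral) (simp add: t_def minor_zero)
  finally show ?thesis using i0 by (simp add: t_def)
qed

lemma col_diag_dominant_col_elim:
  assumes dom: "col_diag_dominant (Suc m) (Suc n) q" and "n \<le> m"
  shows "col_diag_dominant m n (\<lambda>i. col_elim q (Suc i))"
  unfolding col_diag_dominant_def
proof (intro allI impI)
  fix j assume j: "j < n"
  define U where "U = {1..<Suc m} - {Suc j}"
  define a where "a = q 0 0"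
  define u where "u = q 0 (Suc j)"
  define v where "v = q (Suc j) 0"
  define d where "d = q (Suc j) (Suc j)"
  define P where "P = (\<Sum>k\<in>U. \<bar>q k (Suc j)\<bar>)"
  define R where "R = (\<Sum>k\<in>U. \<bar>q k 0\<bar>)"
  have U: "finite U" "0 \<notin> U" "Suc j \<notin> U" by (auto simp: U_def)
  have "q 0 0 > (\<Sum>i\<in>{0..<Suc m} - {0}. \<bar>q i 0\<bar>)"
    using dom by (simp add: col_diag_dominant_def)
  also have "{0..<Suc m} - {0} = insert (Suc j) U"
    using j \<open>n \<le> m\<close> by (auto simp: U_def)
  finally have pivot: "a > \<bar>v\<bar> + R"
    using U by (simp add: a_def v_def R_def)
  have "q (Suc j) (Suc j) > (\<Sum>i\<in>{0..<Suc m} - {Suc j}. \<bar>q i (Suc j)\<bar>)"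
    using dom j by (simp add: col_diag_dominant_def)
  also have "{0..<Suc m} - {Suc j} = insert 0 U"
    by (auto simp: U_def)
  finally have diag: "d > \<bar>u\<bar> + P"
    using U by (simp add: d_def u_def P_def)
  have "R \<ge> 0" unfolding R_def by (simp add: sum_nonneg)
  with pivot have a: "a > 0" by linarith
  have "Suc ` ({0..<m} - {j}) = U"
    by (simp add: U_def image_set_diff image_Suc_atLeastLessThan)
  then have "(\<Sum>i\<in>{0..<m} - {j}. \<bar>col_elim q (Suc i) j\<bar>) = (\<Sum>k\<in>U. \<bar>q k (Suc j) - u / a * q k 0\<bar>)"
    by (auto simp: sum.reindex col_elim_def u_def a_def)
  also have "\<dots> \<le> (\<Sum>k\<in>U. \<bar>q k (Suc j)\<bar> + \<bar>u\<bar> / a * \<bar>q k 0\<bar>)"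
  proof (rule sum_mono)
    fix k
    have "\<bar>u / a * q k 0\<bar> = \<bar>u\<bar> / a * \<bar>q k 0\<bar>" using a by (simp add: abs_mult)
    then show "\<bar>q k (Suc j) - u / a * q k 0\<bar> \<le> \<bar>q k (Suc j)\<bar> + \<bar>u\<bar> / a * \<bar>q k 0\<bar>"
      by (metis abs_triangle_ineq4)
  qed
  also have "\<dots> = P + \<bar>u\<bar> / a * R"
    by (simp add: P_def R_def sum.distrib sum_distrib_left)
  also have "\<dots> \<le> P + \<bar>u\<bar> / a * (a - \<bar>v\<bar>)"
    using pivot a by (intro add_left_mono mult_left_mono) auto
  also have "\<bar>u\<bar> / a * (a - \<bar>v\<bar>) = \<bar>u\<bar> - \<bar>u\<bar> * \<bar>v\<bar> / a"
    using a by (simp add: field_simps)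
  also have "P + (\<bar>u\<bar> - \<bar>u\<bar> * \<bar>v\<bar> / a) < d - \<bar>u\<bar> * \<bar>v\<bar> / a"
    using diag by simp
  also have "\<dots> \<le> d - u * v / a"
    using a by (intro diff_left_mono divide_right_mono) (auto simp: abs_mult[symmetric])
  also have "\<dots> = col_elim q (Suc j) j"
    by (simp add: col_elim_def a_def u_def v_def d_def)
  finally show "col_elim q (Suc j) j > (\<Sum>i\<in>{0..<m} - {j}. \<bar>col_elim q (Suc i) j\<bar>)" .
qed

lemma col_diag_dominant_diag_pos:
  assumes "col_diag_dominant m l q" and "j < l"
  shows "q j j > 0"
proof -
  have "q j j > (\<Sum>i\<in>{0..<m} - {j}. \<bar>q i j\<bar>)"
    using assms unfolding col_diag_dominant_def by blast
  moreover have "(\<Sum>i\<in>{0..<m} - {j}. \<bar>q i j\<bar>) \<ge> 0" by (simp add: sum_nonneg)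
  ultimately show ?thesis by linarith
qed

lemma abs_det_rows_mat_le_pivot:
  assumes dom: "col_diag_dominant (Suc m) (Suc n) q"
    and minor_le: "\<And>h. inj_on h {0..<n} \<Longrightarrow> h ` {0..<n} \<subseteq> {0..<Suc m} \<Longrightarrow>
        \<bar>det (rows_mat n (col_elim q) h)\<bar> \<le> D"
    and g: "inj_on g {0..<Suc n}" "g ` {0..<Suc n} \<subseteq> {0..<Suc m}"
  shows "\<bar>det (rows_mat (Suc n) q g)\<bar> \<le> q 0 0 * D"
proof -
  have a: "q 0 0 > 0" using col_diag_dominant_diag_pos[OF dom] by simp
  have minors: "\<bar>det (rows_mat n (col_elim q) (g \<circ> insert_index i))\<bar> \<le> D" if "i < Suc n" for i
  proof (rule minor_le)
    have "insert_index i ` {0..<n} \<subseteq> {0..<Suc n}" using insert_index_image[OF that] by auto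
    then show "inj_on (g \<circ> insert_index i) {0..<n}" "(g \<circ> insert_index i) ` {0..<n} \<subseteq> {0..<Suc m}"
      using g by (auto intro!: comp_inj_on insert_index_inj_on inj_on_subset[OF g(1)] simp: image_comp[symmetric])
  qed
  show ?thesis
  proof (cases "\<exists>i0<Suc n. g i0 = 0")
    case True
    then obtain i0 where i0: "i0 < Suc n" "g i0 = 0" by blast
    have "\<bar>det (rows_mat (Suc n) q g)\<bar> = q 0 0 * \<bar>det (rows_mat n (col_elim q) (g \<circ> insert_index i0))\<bar>"
      using det_rows_mat_pivot_row[of q i0 n g] i0 a by (simp add: abs_mult)
    also have "\<dots> \<le> q 0 0 * D" using minors[OF i0(1)] a by simp
    finally show ?thesis .
  next
    case False
    have D: "D \<ge> 0" using minors[of 0] by linarith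
    have "\<bar>det (rows_mat (Suc n) q g)\<bar> \<le>
        (\<Sum>i<Suc n. \<bar>q (g i) 0\<bar> * \<bar>det (rows_mat n (col_elim q) (g \<circ> insert_index i))\<bar>)"
      unfolding det_rows_mat_Suc_col_elim by (rule order.trans[OF sum_abs]) (simp add: abs_mult)
    also have "\<dots> \<le> (\<Sum>i<Suc n. \<bar>q (g i) 0\<bar> * D)"
      by (intro sum_mono mult_left_mono minors) auto
    also have "\<dots> = D * (\<Sum>k\<in>g ` {0..<Suc n}. \<bar>q k 0\<bar>)"
      by (simp add: sum.reindex[OF g(1)] sum_distrib_left lessThan_atLeast0 mult.commute del: sum.op_ivl_Suc)
    also have "\<dots> \<le> D * (\<Sum>k\<in>{0..<Suc m} - {0}. \<bar>q k 0\<bar>)"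
      using False g(2) D by (intro mult_left_mono sum_mono2) auto
    also have "\<dots> \<le> D * q 0 0"
      using dom D by (intro mult_left_mono) (auto simp: col_diag_dominant_def less_imp_le)
    finally show ?thesis by (simp add: mult.commute)
  qed
qed

lemma col_diag_dominant_leading_minor_max:
  assumes "col_diag_dominant m l q" and "l \<le> m"
  shows "det (rows_mat l q id) > 0 \<and>
    (\<forall>g. inj_on g {0..<l} \<and> g ` {0..<l} \<subseteq> {0..<m} \<longrightarrow> \<bar>det (rows_mat l q g)\<bar> \<le> det (rows_mat l q id))"
  using assms
proof (induction l arbitrary: m q)
  case 0
  then show ?case by (simp add: rows_mat_def det_def)
next
  case (Suc n)
  then obtain m' where m: "m = Suc m'" and "n \<le> m'" by (cases m) auto
  have dom: "col_diag_dominant (Suc m') (Suc n) q" using Suc.prems m by simp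
  have a: "q 0 0 > 0" using col_diag_dominant_diag_pos[OF dom] by simp
  define r where "r = col_elim q"
  have shifted: "rows_mat n (\<lambda>i. r (Suc i)) h = rows_mat n r (\<lambda>i. Suc (h i))" for h
    by (simp add: rows_mat_def)
  define D where "D = det (rows_mat n r Suc)"
  from Suc.IH[OF col_diag_dominant_col_elim[OF dom \<open>n \<le> m'\<close>] \<open>n \<le> m'\<close>, folded r_def]
  have D: "D > 0"
    and IH: "\<And>h. inj_on h {0..<n} \<Longrightarrow> h ` {0..<n} \<subseteq> {0..<m'} \<Longrightarrow> \<bar>det (rows_mat n r (\<lambda>i. Suc (h i)))\<bar> \<le> D"
    unfolding shifted D_def by (simp_all add: id_def)
  have minor_le: "\<bar>det (rows_mat n r h)\<bar> \<le> D"
    if h: "inj_on h {0..<n}" "h ` {0..<n} \<subseteq> {0..<Suc m'}" for h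
  proof (cases "\<exists>i<n. h i = 0")
    case True
    then obtain i where "i < n" "h i = 0" by blast
    then have "det (rows_mat n r h) = 0"
      using a by (intro det_rows_mat_zero_row) (auto simp: r_def col_elim_first_row)
    with D show ?thesis by simp
  next
    case False
    then have "rows_mat n r h = rows_mat n r (\<lambda>i. Suc (h i - 1))"
      unfolding rows_mat_def by (intro cong_mat) auto
    moreover have "inj_on (\<lambda>i. h i - 1) {0..<n}"
    proof (rule inj_onI)
      fix x y assume x: "x \<in> {0..<n}" and y: "y \<in> {0..<n}" and "h x - 1 = h y - 1"
      moreover have "h x \<noteq> 0" "h y \<noteq> 0" using False x y by auto
      ultimately have "h x = h y" by arith
      with h(1) show "x = y" using x y by (rule inj_onD)
    qed
    moreover have "(\<lambda>i. h i - 1) ` {0..<n} \<subseteq> {0..<m'}"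
    proof (rule image_subsetI)
      fix i assume "i \<in> {0..<n}"
      then have "h i < Suc m'" "h i \<noteq> 0" using False h(2) by (auto simp: image_subset_iff)
      then show "h i - 1 \<in> {0..<m'}" by simp
    qed
    ultimately show ?thesis using IH by simp
  qed
  have leading: "det (rows_mat (Suc n) q id) = q 0 0 * D"
    using det_rows_mat_pivot_row[of q 0 n id] a by (simp add: D_def r_def comp_def)
  show ?case
  proof (intro conjI allI impI)
    show "det (rows_mat (Suc n) q id) > 0" using leading a D by simp
    fix g assume "inj_on g {0..<Suc n} \<and> g ` {0..<Suc n} \<subseteq> {0..<m}"
    then show "\<bar>det (rows_mat (Suc n) q g)\<bar> \<le> det (rows_mat (Suc n) q id)"
      unfolding leading m using abs_det_rows_mat_le_pivot[OF dom minor_le[unfolded r_def]] by blast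
  qed
qed

lemma pick_atLeastLessThan: "j < l \<Longrightarrow> pick {0..<l} j = j"
  by (induction j) (auto intro!: Least_equality)

lemma submatrix_eq_rows_mat_pick:
  assumes "Q \<in> carrier_mat m l" and "I \<subseteq> {0..<m}" and "card I = l"
  shows "submatrix Q I {0..<l} = rows_mat l (\<lambda>i j. Q $$ (i, j)) (pick I)"
proof -
  have "{i. i < dim_row Q \<and> i \<in> I} = I" "{j. j < dim_col Q \<and> j \<in> {0..<l}} = {0..<l}"
    using assms by auto
  then show ?thesis
    using assms by (auto simp: submatrix_def rows_mat_def pick_atLeastLessThan intro!: cong_mat)
qed

lemma inj_on_pick: "n \<le> card S \<Longrightarrow> inj_on (pick S) {0..<n}"
  by (intro inj_onI) (metis atLeastLessThan_iff less_le_trans linorder_neqE_nat pick_mono less_irrefl)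

theorem lemma2p2:
  fixes Q :: "real mat" and m l :: nat
  assumes "Q \<in> carrier_mat m l"
    and "m > l" and "l \<ge> 1"
    and "\<And>j. j < l \<Longrightarrow> Q $$ (j, j) > (\<Sum>i\<in>{0..<m} - {j}. \<bar>Q $$ (i, j)\<bar>)"
  shows "det (submatrix Q {0..<l} {0..<l}) =
         Max {\<bar>det (submatrix Q I {0..<l})\<bar> | I. I \<subseteq> {0..<m} \<and> card I = l}"
proof -
  define q where "q = (\<lambda>i j. Q $$ (i, j))"
  have "col_diag_dominant m l q" using assms(4) by (simp add: col_diag_dominant_def q_def)
  then have pos: "det (rows_mat l q id) > 0"
    and le: "\<And>g. inj_on g {0..<l} \<Longrightarrow> g ` {0..<l} \<subseteq> {0..<m} \<Longrightarrow> \<bar>det (rows_mat l q g)\<bar> \<le> det (rows_mat l q id)"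
    using col_diag_dominant_leading_minor_max[of m l q] assms(2) by auto
  have leading: "submatrix Q {0..<l} {0..<l} = rows_mat l q id"
    using submatrix_eq_rows_mat_pick[OF assms(1), of "{0..<l}"] assms(2)
    by (auto simp: q_def rows_mat_def pick_atLeastLessThan intro!: cong_mat)
  have le_leading: "\<bar>det (submatrix Q I {0..<l})\<bar> \<le> det (rows_mat l q id)"
    if I: "I \<subseteq> {0..<m}" "card I = l" for I
  proof -
    have "submatrix Q I {0..<l} = rows_mat l q (pick I)"
      using submatrix_eq_rows_mat_pick[OF assms(1) I] by (simp only: q_def)
    moreover have "inj_on (pick I) {0..<l}" using I(2) by (simp add: inj_on_pick)
    moreover have "pick I ` {0..<l} \<subseteq> {0..<m}" using I pick_in_set[of _ I] by auto
    ultimately show ?thesis using le by simp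
  qed
  let ?A = "{\<bar>det (submatrix Q I {0..<l})\<bar> | I. I \<subseteq> {0..<m} \<and> card I = l}"
  have "finite ?A"
    by (rule finite_image_set) (simp add: finite_subset)
  moreover have "det (rows_mat l q id) \<in> ?A"
    using leading pos assms(2) by (intro CollectI exI[of _ "{0..<l}"]) simp
  ultimately have "Max ?A = det (rows_mat l q id)"
    using le_leading by (intro Max_eqI) auto
  then show ?thesis unfolding leading by simp
qed

end
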